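(* Let $R$ be a ring and $M$ a left $R$-module. If the prime radical $\beta(M)$ is a completely prime submodule of $M$, then $M$ is 2-primal.
   Context: Rings are associative with identity; modules are unital left modules. A submodule $P$ of $M$ is prime if $RM\not\subseteq P$ and for every ideal $A$ of $R$ and submodule $K$ with $AK\subseteq P$, $K\subseteq P$ or $AM\subseteq P$; completely prime if $RM\not\subseteq P$ and for $r\in R$, $m\in M$, $rm\in P$ implies $m\in P$ or $rM\subseteq P$. $\beta(M)$ (resp. $\beta_{co}(M)$) is the intersection of all prime (resp. completely prime) submodules of $M$ ($=M$ if none). $M$ is 2-primal if $\beta(M)=\beta_{co}(M)$. *)

theory Defs
  imports Main
begin

locale left_module =
  fixes smult :: "'r::{ring, monoid_mult} \<Rightarrow> 'm::ab_group_add \<Rightarrow> 'm" (infixr "\<cdot>" 75)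
  assumes smult_add_right: "r \<cdot> (x + y) = r \<cdot> x + r \<cdot> y"
    and smult_add_left: "(r + s) \<cdot> x = r \<cdot> x + s \<cdot> x"
    and smult_assoc: "(r * s) \<cdot> x = r \<cdot> (s \<cdot> x)"
    and smult_one: "1 \<cdot> x = x"
begin

definition submodule :: "'m set \<Rightarrow> bool" where
  "submodule N \<longleftrightarrow> 0 \<in> N \<and> (\<forall>x\<in>N. \<forall>y\<in>N. x + y \<in> N) \<and> (\<forall>x\<in>N. - x \<in> N)
     \<and> (\<forall>r. \<forall>x\<in>N. r \<cdot> x \<in> N)"

definition ring_ideal :: "'r set \<Rightarrow> bool" where
  "ring_ideal A \<longleftrightarrow> 0 \<in> A \<and> (\<forall>a\<in>A. \<forall>b\<in>A. a + b \<in> A) \<and> (\<forall>a\<in>A. - a \<in> A)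
     \<and> (\<forall>r. \<forall>a\<in>A. r * a \<in> A \<and> a * r \<in> A)"

definition gen_sub :: "'m set \<Rightarrow> 'm set" where
  "gen_sub S = \<Inter>{N. submodule N \<and> S \<subseteq> N}"

definition set_prod :: "'r set \<Rightarrow> 'm set \<Rightarrow> 'm set" where
  "set_prod A K = gen_sub {a \<cdot> k | a k. a \<in> A \<and> k \<in> K}"

definition prime_sub :: "'m set \<Rightarrow> bool" where
  "prime_sub P \<longleftrightarrow> submodule P \<and> \<not> set_prod UNIV UNIV \<subseteq> P \<and>
     (\<forall>A K. ring_ideal A \<and> submodule K \<and> set_prod A K \<subseteq> P \<longrightarrow>
        K \<subseteq> P \<or> set_prod A UNIV \<subseteq> P)"

definition completely_prime_sub :: "'m set \<Rightarrow> bool" where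
  "completely_prime_sub P \<longleftrightarrow> submodule P \<and> \<not> set_prod UNIV UNIV \<subseteq> P \<and>
     (\<forall>r m. r \<cdot> m \<in> P \<longrightarrow> m \<in> P \<or> {r \<cdot> x | x. True} \<subseteq> P)"

text \<open>Intersections; the empty intersection is the whole module (UNIV).\<close>
definition beta :: "'m set" where
  "beta = \<Inter>{P. prime_sub P}"

definition beta_co :: "'m set" where
  "beta_co = \<Inter>{P. completely_prime_sub P}"

definition two_primal :: bool where
  "two_primal \<longleftrightarrow> beta = beta_co"

end

end

theory Submission
  imports Defs
begin

text \<open>Every completely prime submodule is prime, so \<open>\<beta>(M) \<subseteq> \<beta>\<^sub>c\<^sub>o(M)\<close> always holds.
  If \<open>\<beta>(M)\<close> is itself completely prime, it is one of the submodules intersected in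
  \<open>\<beta>\<^sub>c\<^sub>o(M)\<close>, which gives the reverse inclusion.\<close>

context left_module
begin

lemma subset_gen_sub: "S \<subseteq> gen_sub S"
  unfolding gen_sub_def by blast

lemma gen_sub_least: "submodule N \<Longrightarrow> S \<subseteq> N \<Longrightarrow> gen_sub S \<subseteq> N"
  unfolding gen_sub_def by blast

lemma smult_mem_set_prod: "a \<in> A \<Longrightarrow> k \<in> K \<Longrightarrow> a \<cdot> k \<in> set_prod A K"
  unfolding set_prod_def by (rule subsetD[OF subset_gen_sub]) auto

lemma set_prod_least:
  assumes "submodule N" and "\<And>a k. a \<in> A \<Longrightarrow> k \<in> K \<Longrightarrow> a \<cdot> k \<in> N"
  shows "set_prod A K \<subseteq> N"
  unfolding set_prod_def using assms by (intro gen_sub_least) auto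

lemma completely_prime_imp_prime_sub:
  assumes "completely_prime_sub P"
  shows "prime_sub P"
proof -
  have sub: "submodule P" and proper: "\<not> set_prod UNIV UNIV \<subseteq> P"
    and cp: "\<And>r m. r \<cdot> m \<in> P \<Longrightarrow> m \<in> P \<or> {r \<cdot> x | x. True} \<subseteq> P"
    using assms unfolding completely_prime_sub_def by blast+
  have "K \<subseteq> P \<or> set_prod A UNIV \<subseteq> P" if AK: "set_prod A K \<subseteq> P" for A K
  proof (cases "K \<subseteq> P")
    case False
    then obtain k where k: "k \<in> K" "k \<notin> P" by blast
    have "a \<cdot> m \<in> P" if a: "a \<in> A" for a m
    proof -
      have "a \<cdot> k \<in> P" using AK smult_mem_set_prod[OF a k(1)] by blast
      then have "{a \<cdot> x | x. True} \<subseteq> P" using cp k(2) by blast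
      then show ?thesis by blast
    qed
    then show ?thesis using set_prod_least[OF sub] by blast
  qed simp
  then show ?thesis unfolding prime_sub_def using sub proper by blast
qed

lemma beta_subset_beta_co: "beta \<subseteq> beta_co"
  unfolding beta_def beta_co_def
  by (intro Inter_anti_mono) (auto intro: completely_prime_imp_prime_sub)

lemma beta_co_subset: "completely_prime_sub P \<Longrightarrow> beta_co \<subseteq> P"
  unfolding beta_co_def by blast

end

theorem proposition3p9:
  fixes smult :: "'r::{ring, monoid_mult} \<Rightarrow> 'm::ab_group_add \<Rightarrow> 'm"
  assumes "left_module smult"
    and "left_module.completely_prime_sub smult (left_module.beta smult)"
  shows "left_module.two_primal smult"
proof -
  interpret left_module smult by fact
  have "beta_co \<subseteq> beta" using assms(2) by (rule beta_co_subset)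
  with beta_subset_beta_co show ?thesis unfolding two_primal_def by blast
qed

end
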